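(* Let $a<b$ and let $f:[a,b]\rightarrow\mathbb{R}$ be a differentiable mapping in $(a,b)$ such that $f'\in L^1[a,b]$ and $\gamma\le f'(x)\le \Gamma$ for all $x\in [a,b]$, where $\gamma,\Gamma$ are real constants. Put $S=\frac{f(b)-f(a)}{b-a}$. Then \[ \left|\frac{f\left(\frac{3a+b}{4}\right)+f\left(\frac{a+3b}{4}\right)}{2} -\frac{1}{b-a}\int_{a}^{b}f(t)\,dt\right|\leq \frac{b-a}{4}(S-\gamma) \] and \[ \left|\frac{f\left(\frac{3a+b}{4}\right)+f\left(\frac{a+3b}{4}\right)}{2} -\frac{1}{b-a}\int_{a}^{b}f(t)\,dt\right|\leq \frac{b-a}{4}(\Gamma-S). \] *)

theory Defs
  imports "HOL-Analysis.Analysis"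
begin

end

theory Submission
  imports Defs
begin

text \<open>The two-point rule at the quarter points is exact for linear functions, so the error of
  \<open>f\<close> equals that of the nondecreasing function \<open>f x - \<gamma> x\<close>. For a nondecreasing \<open>g\<close>, the
  error on each half of \<open>[a, b]\<close> is a midpoint-rule error, at most the half-length times half the
  increase of \<open>g\<close> on that half; summing gives \<open>\<bar>error\<bar> \<le> (g b - g a) / 4\<close>, i.e.
  \<open>(b - a)/4 \<cdot> (S - \<gamma>)\<close>. The same bound for \<open>-f\<close>, whose derivative is at least \<open>-\<Gamma>\<close>, gives
  \<open>(b - a)/4 \<cdot> (\<Gamma> - S)\<close>.\<close>

definition quarter_point_error :: "real \<Rightarrow> real \<Rightarrow> (real \<Rightarrow> real) \<Rightarrow> real" where
  "quarter_point_error a b g =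
     (g ((3*a + b)/4) + g ((a + 3*b)/4)) / 2 - (1/(b - a)) * integral {a..b} g"

lemma mono_on_if_deriv_nonneg:
  fixes g g' :: "real \<Rightarrow> real"
  assumes "continuous_on {a..b} g"
    and "\<And>x. x \<in> {a<..<b} \<Longrightarrow> (g has_real_derivative g' x) (at x)"
    and "\<And>x. x \<in> {a<..<b} \<Longrightarrow> 0 \<le> g' x"
  shows "mono_on {a..b} g"
proof (rule mono_onI)
  fix x y assume "x \<in> {a..b}" "y \<in> {a..b}" "x \<le> y"
  show "g x \<le> g y"
  proof (rule DERIV_nonneg_imp_increasing_open[OF \<open>x \<le> y\<close>])
    show "continuous_on {x..y} g"
      using \<open>x \<in> {a..b}\<close> \<open>y \<in> {a..b}\<close> by (intro continuous_on_subset[OF assms(1)]) auto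
    fix t assume "x < t" "t < y"
    then have "t \<in> {a<..<b}" using \<open>x \<in> {a..b}\<close> \<open>y \<in> {a..b}\<close> by auto
    with assms(2,3) show "\<exists>d. (g has_real_derivative d) (at t) \<and> 0 \<le> d" by blast
  qed
qed

lemma integral_between_endpoint_values:
  fixes g :: "real \<Rightarrow> real"
  assumes "p \<le> q" and mono: "mono_on {p..q} g"
  shows "g p * (q - p) \<le> integral {p..q} g" and "integral {p..q} g \<le> g q * (q - p)"
proof -
  have int: "g integrable_on {p..q}" using mono by (rule integrable_on_mono_on)
  have "integral {p..q} (\<lambda>_. g p) \<le> integral {p..q} g"
    using \<open>p \<le> q\<close> by (intro integral_le int) (auto intro: mono_onD[OF mono])
  then show "g p * (q - p) \<le> integral {p..q} g" using \<open>p \<le> q\<close> by (simp add: mult.commute)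
  have "integral {p..q} g \<le> integral {p..q} (\<lambda>_. g q)"
    using \<open>p \<le> q\<close> by (intro integral_le int) (auto intro: mono_onD[OF mono])
  then show "integral {p..q} g \<le> g q * (q - p)" using \<open>p \<le> q\<close> by (simp add: mult.commute)
qed

lemma midpoint_rule_error_mono_on:
  fixes g :: "real \<Rightarrow> real"
  assumes "p \<le> q" and mono: "mono_on {p..q} g"
  shows "\<bar>integral {p..q} g - g ((p + q)/2) * (q - p)\<bar> \<le> (g q - g p) * (q - p) / 2"
proof -
  define m where "m = (p + q)/2"
  define h where "h = (q - p)/2"
  have m: "p \<le> m" "m \<le> q" "m - p = h" "q - m = h" "q - p = 2 * h" "0 \<le> h"
    using \<open>p \<le> q\<close> by (auto simp: m_def h_def field_simps)
  have mono_left: "mono_on {p..m} g" and mono_right: "mono_on {m..q} g"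
    using mono m by (auto intro: mono_on_subset)
  have "integral {p..m} g + integral {m..q} g = integral {p..q} g"
    using m by (intro Henstock_Kurzweil_Integration.integral_combine integrable_on_mono_on mono)
  moreover note integral_between_endpoint_values[OF \<open>p \<le> m\<close> mono_left, unfolded m(3)]
    integral_between_endpoint_values[OF \<open>m \<le> q\<close> mono_right, unfolded m(4)]
  moreover have "g p * h \<le> g m * h" "g m * h \<le> g q * h"
    using m by (auto intro!: mult_right_mono mono_onD[OF mono])
  moreover have "(g q - g p) * (2 * h) / 2 = g q * h - g p * h" "g m * (2 * h) = 2 * (g m * h)"
    by (simp_all add: field_simps)
  ultimately show ?thesis
    unfolding m_def[symmetric] m(5) abs_le_iff by linarith
qed

lemma quarter_point_error_mono_on:
  fixes g :: "real \<Rightarrow> real"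
  assumes "a < b" and mono: "mono_on {a..b} g"
  shows "\<bar>quarter_point_error a b g\<bar> \<le> (g b - g a) / 4"
proof -
  define c where "c = (a + b)/2"
  define L where "L = (b - a)/2"
  have c: "a \<le> c" "c \<le> b" "c - a = L" "b - c = L" "(a + c)/2 = (3*a + b)/4" "(c + b)/2 = (a + 3*b)/4"
    using \<open>a < b\<close> by (auto simp: c_def L_def field_simps)
  have "0 < L" using \<open>a < b\<close> by (simp add: L_def)
  have "integral {a..c} g + integral {c..b} g = integral {a..b} g"
    using c by (intro Henstock_Kurzweil_Integration.integral_combine integrable_on_mono_on mono)
  moreover have "mono_on {a..c} g" "mono_on {c..b} g"
    using mono c(1,2) by (auto intro: mono_on_subset)
  note midpoint_rule_error_mono_on[OF \<open>a \<le> c\<close> this(1), unfolded c(3,5)]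
    midpoint_rule_error_mono_on[OF \<open>c \<le> b\<close> this(2), unfolded c(4,6)]
  moreover have "(g c - g a) * L / 2 + (g b - g c) * L / 2 = (g b - g a) * L / 2"
    "(g ((3*a + b)/4) + g ((a + 3*b)/4)) * L = g ((3*a + b)/4) * L + g ((a + 3*b)/4) * L"
    by (simp_all add: field_simps)
  ultimately have "\<bar>(g ((3*a + b)/4) + g ((a + 3*b)/4)) * L - integral {a..b} g\<bar> \<le> (g b - g a) * L / 2"
    unfolding abs_le_iff by linarith
  moreover have "quarter_point_error a b g
      = ((g ((3*a + b)/4) + g ((a + 3*b)/4)) * L - integral {a..b} g) / (2 * L)"
    using \<open>0 < L\<close> unfolding quarter_point_error_def L_def by (simp add: field_simps)
  ultimately show ?thesis
    using \<open>0 < L\<close> by (simp add: divide_le_eq mult.commute)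
qed

lemma quarter_point_error_affine:
  fixes g :: "real \<Rightarrow> real"
  assumes "a < b" and "g integrable_on {a..b}"
  shows "quarter_point_error a b (\<lambda>x. c * g x + k * x) = c * quarter_point_error a b g"
proof -
  have "(\<lambda>x. c * g x) integrable_on {a..b}"
    using integrable_on_cmult_left[OF assms(2), of c] by simp
  moreover have "(\<lambda>x. k * x) integrable_on {a..b}"
    by (intro integrable_continuous_interval continuous_intros)
  ultimately have "integral {a..b} (\<lambda>x. c * g x + k * x)
      = c * integral {a..b} g + k * ((b\<^sup>2 - a\<^sup>2) / 2)"
    using \<open>a < b\<close> by (simp add: integral_add)
  also have "b\<^sup>2 - a\<^sup>2 = (b - a) * (a + b)" by (simp add: power2_eq_square algebra_simps)
  finally have integral_eq:
    "integral {a..b} (\<lambda>x. c * g x + k * x) = c * integral {a..b} g + k * ((b - a) * (a + b) / 2)" .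
  have "(1/(b - a)) * integral {a..b} (\<lambda>x. c * g x + k * x)
      = c * ((1/(b - a)) * integral {a..b} g) + k * (a + b) / 2"
    unfolding integral_eq using \<open>a < b\<close> by (simp add: field_simps)
  then show ?thesis
    unfolding quarter_point_error_def by (simp add: algebra_simps add_divide_distrib)
qed

lemma quarter_point_error_deriv_ge:
  fixes g g' :: "real \<Rightarrow> real"
  assumes "a < b" and cont: "continuous_on {a..b} g"
    and deriv: "\<And>x. x \<in> {a<..<b} \<Longrightarrow> (g has_real_derivative g' x) (at x)"
    and ge: "\<And>x. x \<in> {a<..<b} \<Longrightarrow> \<gamma> \<le> g' x"
  shows "\<bar>quarter_point_error a b g\<bar> \<le> (b - a)/4 * ((g b - g a) / (b - a) - \<gamma>)"
proof -
  have "mono_on {a..b} (\<lambda>x. 1 * g x + (- \<gamma>) * x)"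
  proof (rule mono_on_if_deriv_nonneg)
    show "continuous_on {a..b} (\<lambda>x. 1 * g x + (- \<gamma>) * x)"
      by (intro continuous_intros cont)
    fix x assume x: "x \<in> {a<..<b}"
    show "((\<lambda>x. 1 * g x + (- \<gamma>) * x) has_real_derivative g' x - \<gamma>) (at x)"
      using deriv[OF x] by (auto intro!: derivative_eq_intros)
    show "0 \<le> g' x - \<gamma>" using ge[OF x] by simp
  qed
  from quarter_point_error_mono_on[OF \<open>a < b\<close> this]
  have "\<bar>quarter_point_error a b g\<bar> \<le> (g b - \<gamma> * b - (g a - \<gamma> * a)) / 4"
    unfolding quarter_point_error_affine[OF \<open>a < b\<close> integrable_continuous_interval[OF cont]]
    by simp
  also have "\<dots> = (b - a)/4 * ((g b - g a) / (b - a) - \<gamma>)"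
    using \<open>a < b\<close> by (simp add: field_simps)
  finally show ?thesis .
qed

theorem corollary2p1:
  fixes f f' :: "real \<Rightarrow> real" and a b \<gamma> \<Gamma> S :: real
  assumes ab: "a < b"
    and cont: "continuous_on {a..b} f"
    and deriv: "\<And>x. x \<in> {a<..<b} \<Longrightarrow> (f has_real_derivative f' x) (at x)"
    and L1: "f' absolutely_integrable_on {a..b}"
    and bounds: "\<And>x. x \<in> {a..b} \<Longrightarrow> \<gamma> \<le> f' x \<and> f' x \<le> \<Gamma>"
    and S_def: "S = (f b - f a) / (b - a)"
  shows "\<bar>(f ((3*a + b)/4) + f ((a + 3*b)/4)) / 2 - (1/(b - a)) * integral {a..b} f\<bar>
           \<le> (b - a)/4 * (S - \<gamma>) \<and>
         \<bar>(f ((3*a + b)/4) + f ((a + 3*b)/4)) / 2 - (1/(b - a)) * integral {a..b} f\<bar>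
           \<le> (b - a)/4 * (\<Gamma> - S)"
proof -
  have lower: "\<bar>quarter_point_error a b f\<bar> \<le> (b - a)/4 * (S - \<gamma>)"
    unfolding S_def using bounds by (intro quarter_point_error_deriv_ge[OF ab cont deriv]) auto
  have "\<bar>quarter_point_error a b (\<lambda>x. - f x)\<bar> \<le> (b - a)/4 * ((f a - f b) / (b - a) + \<Gamma>)"
    using quarter_point_error_deriv_ge[OF ab continuous_on_minus[OF cont] DERIV_minus[OF deriv],
        of "- \<Gamma>"] bounds
    by (simp add: minus_divide_left)
  moreover have "quarter_point_error a b (\<lambda>x. - f x) = - quarter_point_error a b f"
    using quarter_point_error_affine[OF ab integrable_continuous_interval[OF cont], of "- 1" 0]
    by simp
  ultimately have upper: "\<bar>quarter_point_error a b f\<bar> \<le> (b - a)/4 * (\<Gamma> - S)"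
    unfolding S_def by (simp add: diff_divide_distrib algebra_simps)
  from lower upper show ?thesis
    unfolding quarter_point_error_def by blast
qed

end
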